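(* Let $T=(V,E)$ be a finite rooted tree (an elimination tree), let $\Pr$ be a probability distribution over a finite set of queries, and let $R\subseteq V$. Let $u,v\in R$ be such that $v\in A(u)$ (i.e., $v$ is a proper ancestor of $u$) and $\mathrm{path}(u,v)\cap R=\emptyset$. Then $$\mathbb{E}[I(u,R)]=\mathbb{E}[I(u,v)],$$ where the expectation is over the query distribution.
   Context: $T=(V,E)$ is a finite rooted tree. For $u\in V$, $T(u)$ denotes the set of nodes of the subtree rooted at $u$ (including $u$), $A(u)$ the set of proper ancestors of $u$ (the nodes on the path from $u$ to the root, excluding $u$), and for $v\in A(u)$, $\mathrm{path}(u,v)$ the set of nodes strictly between $u$ and $v$ on that path. Each non-leaf node of $T$ is associated with a variable from a finite set $X$; $\mathrm{vars}(u)\subseteq X$ denotes the set of variables associated with the nodes of $T(u)$. Each query $q$ determines a set $Z_q\subseteq X$ (its summed-out variables). For $R\subseteq V$, $u\in V$ and a query $q$, define $I_q(u,R)=1$ if (i) $u\in R$, (ii) $\mathrm{vars}(u)\subseteq Z_q$, and (iii) there is no $w\in A(u)$ with $w\in R$ and $\mathrm{vars}(w)\subseteq Z_q$; otherwise $I_q(u,R)=0$. Set $\mathbb{E}[I(u,R)]=\sum_q \Pr(q)\,I_q(u,R)$. For $v\in A(u)$ write $\mathbb{E}[I(u,v)]:=\mathbb{E}[I(u,\{u,v\})]$. *)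

theory Defs
  imports Complex_Main
begin

definition rooted_tree :: "'v set \<Rightarrow> 'v \<Rightarrow> ('v \<Rightarrow> 'v) \<Rightarrow> bool" where
  "rooted_tree V r par \<longleftrightarrow> finite V \<and> r \<in> V \<and> par r = r \<and>
     (\<forall>u\<in>V. par u \<in> V) \<and> (\<forall>u\<in>V. \<exists>k. (par ^^ k) u = r)"

definition anc :: "('v \<Rightarrow> 'v) \<Rightarrow> 'v \<Rightarrow> 'v set" where
  "anc par u = {(par ^^ k) u | k. k \<ge> 1} - {u}"

definition subtree :: "'v set \<Rightarrow> ('v \<Rightarrow> 'v) \<Rightarrow> 'v \<Rightarrow> 'v set" where
  "subtree V par u = {w \<in> V. w = u \<or> u \<in> anc par w}"

definition tpath :: "('v \<Rightarrow> 'v) \<Rightarrow> 'v \<Rightarrow> 'v \<Rightarrow> 'v set" where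
  "tpath par u v = {w \<in> anc par u. v \<in> anc par w}"

definition nonleaf :: "'v set \<Rightarrow> 'v \<Rightarrow> ('v \<Rightarrow> 'v) \<Rightarrow> 'v \<Rightarrow> bool" where
  "nonleaf V r par w \<longleftrightarrow> (\<exists>c\<in>V. c \<noteq> r \<and> par c = w)"

definition tvars :: "'v set \<Rightarrow> 'v \<Rightarrow> ('v \<Rightarrow> 'v) \<Rightarrow> ('v \<Rightarrow> 'x) \<Rightarrow> 'v \<Rightarrow> 'x set" where
  "tvars V r par var u = var ` {w \<in> subtree V par u. nonleaf V r par w}"

text \<open>I_q(u,R) for a query with summed-out variable set Zq.\<close>
definition Iq :: "'v set \<Rightarrow> 'v \<Rightarrow> ('v \<Rightarrow> 'v) \<Rightarrow> ('v \<Rightarrow> 'x) \<Rightarrow> 'x set \<Rightarrow> 'v \<Rightarrow> 'v set \<Rightarrow> real" where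
  "Iq V r par var Zq u R =
     (if u \<in> R \<and> tvars V r par var u \<subseteq> Zq \<and>
         \<not> (\<exists>w\<in>anc par u. w \<in> R \<and> tvars V r par var w \<subseteq> Zq) then 1 else 0)"

definition EI :: "'q set \<Rightarrow> ('q \<Rightarrow> real) \<Rightarrow> ('q \<Rightarrow> 'x set) \<Rightarrow> 'v set \<Rightarrow> 'v \<Rightarrow> ('v \<Rightarrow> 'v)
    \<Rightarrow> ('v \<Rightarrow> 'x) \<Rightarrow> 'v \<Rightarrow> 'v set \<Rightarrow> real" where
  "EI Q Pr Z V r par var u R = (\<Sum>q\<in>Q. Pr q * Iq V r par var (Z q) u R)"

end

theory Submission
  imports Defs
begin

text \<open>The identity already holds query by query. Every proper ancestor of u lying in R is either v or lies above v, because no node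
  of R lies strictly between u and v. Since vars is monotone along ancestors, an ancestor w
  above v with vars(w) \<subseteq> Z_q forces vars(v) \<subseteq> Z_q. Hence condition (iii) for R holds
  exactly when it holds for {u, v}.\<close>

lemma funpow_fixed_point: "f x = x \<Longrightarrow> (f ^^ n) x = x"
  by (induction n) auto

lemma funpow_le_split: "a \<le> b \<Longrightarrow> (f ^^ b) x = (f ^^ (b - a)) ((f ^^ a) x)"
  by (metis funpow_add le_add_diff_inverse2 o_apply)

lemma rooted_tree_funpow_stays_root:
  assumes tree: "rooted_tree V r par" and k: "(par ^^ k) x = r" and km: "k \<le> m"
  shows "(par ^^ m) x = r"
proof -
  have "par r = r"
    using tree unfolding rooted_tree_def by blast
  then show ?thesis
    using funpow_le_split[OF km, of par x] k funpow_fixed_point[of par r] by simp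
qed

lemma rooted_tree_cycle_is_root:
  assumes tree: "rooted_tree V r par" and x: "x \<in> V" and n: "n \<ge> 1"
    and cycle: "(par ^^ n) x = x"
  shows "x = r"
proof -
  from tree x obtain k where k: "(par ^^ k) x = r"
    unfolding rooted_tree_def by blast
  have "x = (par ^^ (k * n)) x"
    using funpow_mod_eq[OF cycle, of "k * n"] by simp
  also have "\<dots> = r"
    using rooted_tree_funpow_stays_root[OF tree k] n by simp
  finally show ?thesis .
qed

lemma anc_trans:
  assumes tree: "rooted_tree V r par" and x: "x \<in> V"
    and v: "v \<in> anc par x" and w: "w \<in> anc par v"
  shows "w \<in> anc par x"
proof -
  from v obtain j where j: "j \<ge> 1" "v = (par ^^ j) x" unfolding anc_def by blast
  from w obtain k where k: "k \<ge> 1" "w = (par ^^ k) v" "w \<noteq> v" unfolding anc_def by blast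
  have wx: "w = (par ^^ (k + j)) x"
    using j k by (simp add: funpow_add)
  have "w \<noteq> x"
  proof
    assume "w = x"
    then have "x = r"
      using rooted_tree_cycle_is_root[OF tree x, of "k + j"] wx k by simp
    then have "v = r" "w = r"
      using j(2) wx funpow_fixed_point[of par r] tree unfolding rooted_tree_def by simp_all
    then show False using k(3) by simp
  qed
  then show ?thesis
    using wx k(1) unfolding anc_def by (auto intro!: exI[of _ "k + j"])
qed

lemma anc_linear:
  assumes "w \<in> anc par u" "v \<in> anc par u"
  shows "w = v \<or> v \<in> anc par w \<or> w \<in> anc par v"
proof -
  from assms obtain a b where a: "a \<ge> 1" "w = (par ^^ a) u" "w \<noteq> u"
    and b: "b \<ge> 1" "v = (par ^^ b) u" "v \<noteq> u"
    unfolding anc_def by blast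
  consider "a < b" | "a = b" | "b < a" by linarith
  then show ?thesis
  proof cases
    case 1
    then have "v = (par ^^ (b - a)) w" "b - a \<ge> 1"
      using funpow_le_split[of a b par u] 1 a(2) b(2) by simp_all
    then show ?thesis unfolding anc_def by blast
  next
    case 2
    then show ?thesis using a b by simp
  next
    case 3
    then have "w = (par ^^ (a - b)) v" "a - b \<ge> 1"
      using funpow_le_split[of b a par u] 3 a(2) b(2) by simp_all
    then show ?thesis unfolding anc_def by blast
  qed
qed

lemma tvars_anc_mono:
  assumes tree: "rooted_tree V r par" and w: "w \<in> anc par v"
  shows "tvars V r par var v \<subseteq> tvars V r par var w"
proof -
  have "subtree V par v \<subseteq> subtree V par w"
    using anc_trans[OF tree _ _ w] w unfolding subtree_def by auto
  then show ?thesis unfolding tvars_def by blast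
qed

lemma ex_anc_covered_iff_nearest:
  assumes tree: "rooted_tree V r par" and vR: "v \<in> R"
    and v_anc: "v \<in> anc par u" and path_disj: "tpath par u v \<inter> R = {}"
  shows "(\<exists>w\<in>anc par u. w \<in> R \<and> tvars V r par var w \<subseteq> Zq) \<longleftrightarrow>
    tvars V r par var v \<subseteq> Zq"
proof
  assume "\<exists>w\<in>anc par u. w \<in> R \<and> tvars V r par var w \<subseteq> Zq"
  then obtain w where w: "w \<in> anc par u" "w \<in> R" "tvars V r par var w \<subseteq> Zq"
    by blast
  have "v \<notin> anc par w"
    using w(1,2) path_disj unfolding tpath_def by blast
  then have "w = v \<or> w \<in> anc par v"
    using anc_linear[OF w(1) v_anc] by blast
  then show "tvars V r par var v \<subseteq> Zq"
    using tvars_anc_mono[OF tree, of w v var] w(3) by blast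
qed (use vR v_anc in blast)

lemma Iq_eq_nearest_ancestor:
  assumes tree: "rooted_tree V r par" and uR: "u \<in> R" and vR: "v \<in> R"
    and v_anc: "v \<in> anc par u" and path_disj: "tpath par u v \<inter> R = {}"
  shows "Iq V r par var Zq u R = Iq V r par var Zq u {u, v}"
proof -
  have "tpath par u v \<inter> {u, v} = {}"
    unfolding tpath_def anc_def by auto
  then have "(\<exists>w\<in>anc par u. w \<in> {u, v} \<and> tvars V r par var w \<subseteq> Zq) \<longleftrightarrow>
      tvars V r par var v \<subseteq> Zq"
    by (rule ex_anc_covered_iff_nearest[OF tree insertI2[OF singletonI] v_anc])
  moreover note ex_anc_covered_iff_nearest[OF tree vR v_anc path_disj]
  ultimately have "(\<exists>w\<in>anc par u. w \<in> R \<and> tvars V r par var w \<subseteq> Zq) \<longleftrightarrow>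
      (\<exists>w\<in>anc par u. w \<in> {u, v} \<and> tvars V r par var w \<subseteq> Zq)"
    by (simp only:)
  then show ?thesis
    using uR unfolding Iq_def by simp
qed

theorem lemma1:
  fixes V :: "'v set" and r :: 'v and par :: "'v \<Rightarrow> 'v"
    and X :: "'x set" and var :: "'v \<Rightarrow> 'x"
    and Q :: "'q set" and Pr :: "'q \<Rightarrow> real" and Z :: "'q \<Rightarrow> 'x set"
    and R :: "'v set" and u v :: 'v
  assumes tree: "rooted_tree V r par"
    and X_fin: "finite X"
    and var_X: "\<forall>w\<in>V. nonleaf V r par w \<longrightarrow> var w \<in> X"
    and Q_fin: "finite Q"
    and Pr_nonneg: "\<forall>q\<in>Q. Pr q \<ge> 0"
    and Pr_sum: "(\<Sum>q\<in>Q. Pr q) = 1"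
    and Z_X: "\<forall>q\<in>Q. Z q \<subseteq> X"
    and R_V: "R \<subseteq> V"
    and uR: "u \<in> R" and vR: "v \<in> R"
    and v_anc: "v \<in> anc par u"
    and path_disj: "tpath par u v \<inter> R = {}"
  shows "EI Q Pr Z V r par var u R = EI Q Pr Z V r par var u {u, v}"
  unfolding EI_def
  by (simp add: Iq_eq_nearest_ancestor[OF tree uR vR v_anc path_disj])

end
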